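(* Let $n\ge 1$, let $q$ be an indeterminate, and let $\mathcal F^n$ be the Fock representation of the $q$-boson algebra described in the context, with the parameter $z=1$ (periodic boundary conditions; site indices are read modulo $n$, so $\beta_0=\beta_n$, $\beta^*_{n+1}=\beta^*_1$). Let $Q^+(v)=\sum_{r\ge0}Q^+_rv^r$ be the $Q^+$-operator defined in the context; since $Q^+_0=1$ it is invertible as a formal power series in $v$ with coefficients in $\mathrm{End}\,\mathcal F^n$. For $j=1,\dots,n$ define the formal power series $$\tilde\beta_j(v)=Q^+(v)\,\beta_j\,Q^+(v)^{-1}=\sum_{r\ge0}v^r\tilde\beta_{j,r},\qquad \tilde\beta^*_j(v)=Q^+(v)\,\beta^*_j\,Q^+(v)^{-1}=\sum_{r\ge0}v^r\tilde\beta^*_{j,r}.$$ Then, writing $\tilde\beta_j=\tilde\beta_j(v)$ and $\tilde\beta_j^*=\tilde\beta^*_j(v)$, for all $j$ (indices mod $n$) $$\tilde\beta_j-\beta_j=v\,(1-\beta_j^*\tilde\beta_j)\,\tilde\beta_{j-1},\qquad \tilde\beta_j^*-\beta_j^*=v\,\beta^*_{j+1}\,(\beta_j^*\tilde\beta_j-1).$$ Moreover these relations determine the coefficients $\tilde\beta_{j,r},\tilde\beta^*_{j,r}$ recursively (order by order in $v$) when expanding in powers of $v$.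
   Context: $(q^2)_m:=\prod_{j=1}^m(1-q^{2j})$. Fock representation: $\mathcal F^n$ is the $\mathbb C(q)$-vector space with basis $|\lambda\rangle$ indexed by partitions $\lambda$ with at most $n$ parts; put $m_j(\lambda)=\lambda_j-\lambda_{j+1}$ ($\lambda_{n+1}=0$), the multiplicity of columns of height $j$ in the Young diagram of $\lambda$ (interpreted as the number of particles at site $j$), so $\lambda\leftrightarrow(m_1,\dots,m_n)\in\mathbb Z_{\ge0}^n$ bijectively. Operators: $\beta_j^*$ sends $|\lambda\rangle$ to $(1-q^{2m_j(\lambda)+2})$ times the basis vector with $m_j$ increased by one; $\beta_j$ sends $|\lambda\rangle$ to the basis vector with $m_j$ decreased by one (and to $0$ if $m_j(\lambda)=0$); $q^{N_j}|\lambda\rangle=q^{m_j(\lambda)}|\lambda\rangle$ and $q^{2N_j}=(q^{N_j})^2$. In particular $\beta_j^*\beta_j=1-q^{2N_j}$. The $Q^+$-operator: $Q^+(v)=\sum_{r\ge0}v^rQ^+_r$ with $$Q^+_r=(-1)^r\sum_{\alpha}z^{\alpha_n}\frac{(\beta_1^* )^{\alpha_n}(\beta_1\beta_2^* )^{\alpha_1}\cdots(\beta_{n-1}\beta_n^* )^{\alpha_{n-1}}\beta_n^{\alpha_n}}{(q^2)_{\alpha_1}\cdots(q^2)_{\alpha_n}},$$ the sum over all compositions $\alpha=(\alpha_1,\dots,\alpha_n)\in\mathbb Z_{\ge0}^n$ with $\alpha_1+\dots+\alpha_n=r$ (here $z=1$). Equivalently, $Q^+(v)$ is the trace $\sum_{m_1,\dots,m_n\ge0}z^{m_1}\ell_1(m_1,m_2)\ell_2(m_2,m_3)\cdots\ell_n(m_n,m_1)$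 with $\ell_i(a,b)=(-v)^a(\beta_i^* )^a\beta_i^b/(q^2)_a$. *)

theory Defs
  imports "HOL-Computational_Algebra.Polynomial" "HOL-Computational_Algebra.Fraction_Field"
begin

text \<open>Ground field C(q): rational functions in an indeterminate q over the complex numbers.\<close>
type_synonym K = "complex poly fract"

definition qq :: K where "qq = Fract [:0, 1:] 1"

definition qpoch :: "nat \<Rightarrow> K" where
  "qpoch m = (\<Prod>j=1..m. 1 - qq ^ (2 * j))"

text \<open>Configurations m = (m_1,...,m_n) (sites 1..n; m i = 0 outside 1..n),
  vectors as coefficient functions on configurations, operators as maps on vectors.\<close>
type_synonym cfg = "nat \<Rightarrow> nat"
type_synonym vec = "cfg \<Rightarrow> K"
type_synonym op = "vec \<Rightarrow> vec"

definition is_cfg :: "nat \<Rightarrow> cfg \<Rightarrow> bool" where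
  "is_cfg n m \<longleftrightarrow> (\<forall>i. i \<notin> {1..n} \<longrightarrow> m i = 0)"

text \<open>Elements of the Fock space F^n: finite linear combinations of basis vectors |m>.\<close>
definition fock :: "nat \<Rightarrow> vec \<Rightarrow> bool" where
  "fock n f \<longleftrightarrow> finite {m. f m \<noteq> 0} \<and> (\<forall>m. f m \<noteq> 0 \<longrightarrow> is_cfg n m)"

text \<open>beta_j |m> = |m - e_j> (0 if m_j = 0); on coefficients: (beta_j f)(m) = f(m + e_j).\<close>
definition bet :: "nat \<Rightarrow> op" where
  "bet j f = (\<lambda>m. f (m(j := Suc (m j))))"

text \<open>beta*_j |m> = (1 - q^(2 m_j + 2)) |m + e_j>.\<close>
definition betS :: "nat \<Rightarrow> op" where
  "betS j f = (\<lambda>m. if m j = 0 then 0 else (1 - qq ^ (2 * m j)) * f (m(j := m j - 1)))"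

definition op_add :: "op \<Rightarrow> op \<Rightarrow> op" where
  "op_add A B = (\<lambda>f m. A f m + B f m)"
definition op_sub :: "op \<Rightarrow> op \<Rightarrow> op" where
  "op_sub A B = (\<lambda>f m. A f m - B f m)"
definition op_zero :: op where
  "op_zero = (\<lambda>f m. 0)"
definition op_smul :: "K \<Rightarrow> op \<Rightarrow> op" where
  "op_smul c A = (\<lambda>f m. c * A f m)"
definition op_sum :: "'i set \<Rightarrow> ('i \<Rightarrow> op) \<Rightarrow> op" where
  "op_sum S A = (\<lambda>f m. \<Sum>i\<in>S. A i f m)"

definition comps :: "nat \<Rightarrow> nat \<Rightarrow> (nat \<Rightarrow> nat) set" where
  "comps n r = {\<alpha>. (\<forall>i. i \<notin> {1..n} \<longrightarrow> \<alpha> i = 0) \<and> (\<Sum>i=1..n. \<alpha> i) = r}"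

definition Qword :: "nat \<Rightarrow> (nat \<Rightarrow> nat) \<Rightarrow> op" where
  "Qword n \<alpha> = (betS 1 ^^ \<alpha> n) \<circ>
      foldr (\<lambda>i acc. ((bet i \<circ> betS (Suc i)) ^^ \<alpha> i) \<circ> acc) [1..<n] id \<circ>
      (bet n ^^ \<alpha> n)"

definition Qcoef :: "nat \<Rightarrow> nat \<Rightarrow> op" where
  "Qcoef n r = op_smul ((-1) ^ r)
     (op_sum (comps n r) (\<lambda>\<alpha>. op_smul (inverse (\<Prod>i=1..n. qpoch (\<alpha> i))) (Qword n \<alpha>)))"

text \<open>Coefficients of Q^+(v)^{-1} (as a formal power series in v), computed recursively
  from Q^+_0 = 1: P_0 = 1, P_r = - sum_{k=1}^r Q^+_k P_{r-k}.\<close>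
primrec Qinvl :: "nat \<Rightarrow> nat \<Rightarrow> op list" where
  "Qinvl n 0 = [id]"
| "Qinvl n (Suc r) = (let L = Qinvl n r in
     L @ [op_smul (-1) (op_sum {1..Suc r} (\<lambda>k. Qcoef n k \<circ> L ! (Suc r - k)))])"

definition Qinv :: "nat \<Rightarrow> nat \<Rightarrow> op" where
  "Qinv n r = Qinvl n r ! r"

text \<open>Formal power series in v with operator coefficients: nat => op.\<close>
definition ps_mult :: "(nat \<Rightarrow> op) \<Rightarrow> (nat \<Rightarrow> op) \<Rightarrow> nat \<Rightarrow> op" where
  "ps_mult A B r = op_sum {..r} (\<lambda>k. A k \<circ> B (r - k))"
definition ps_const :: "op \<Rightarrow> nat \<Rightarrow> op" where
  "ps_const A r = (if r = 0 then A else op_zero)"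
definition ps_one :: "nat \<Rightarrow> op" where
  "ps_one = ps_const id"
definition ps_sub :: "(nat \<Rightarrow> op) \<Rightarrow> (nat \<Rightarrow> op) \<Rightarrow> nat \<Rightarrow> op" where
  "ps_sub A B r = op_sub (A r) (B r)"
text \<open>multiplication by v\<close>
definition ps_v :: "(nat \<Rightarrow> op) \<Rightarrow> nat \<Rightarrow> op" where
  "ps_v A r = (if r = 0 then op_zero else A (r - 1))"

definition Qser :: "nat \<Rightarrow> nat \<Rightarrow> op" where
  "Qser n = Qcoef n"

definition conjQ :: "nat \<Rightarrow> op \<Rightarrow> nat \<Rightarrow> op" where
  "conjQ n A = ps_mult (ps_mult (Qser n) (ps_const A)) (Qinv n)"

definition tbet :: "nat \<Rightarrow> nat \<Rightarrow> nat \<Rightarrow> op" where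
  "tbet n j = conjQ n (bet j)"
definition tbetS :: "nat \<Rightarrow> nat \<Rightarrow> nat \<Rightarrow> op" where
  "tbetS n j = conjQ n (betS j)"

definition prevs :: "nat \<Rightarrow> nat \<Rightarrow> nat" where
  "prevs n j = (if j = 1 then n else j - 1)"
definition nexts :: "nat \<Rightarrow> nat \<Rightarrow> nat" where
  "nexts n j = (if j = n then 1 else j + 1)"

definition eq_on :: "nat \<Rightarrow> op \<Rightarrow> op \<Rightarrow> bool" where
  "eq_on n A B \<longleftrightarrow> (\<forall>f. fock n f \<longrightarrow> A f = B f)"

definition rels :: "nat \<Rightarrow> (nat \<Rightarrow> nat \<Rightarrow> op) \<Rightarrow> (nat \<Rightarrow> nat \<Rightarrow> op) \<Rightarrow> bool" where
  "rels n X Y \<longleftrightarrow> (\<forall>j\<in>{1..n}. \<forall>r.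
     eq_on n (ps_sub (X j) (ps_const (bet j)) r)
       (ps_v (ps_mult (ps_sub ps_one (ps_mult (ps_const (betS j)) (X j))) (X (prevs n j))) r)
   \<and> eq_on n (ps_sub (Y j) (ps_const (betS j)) r)
       (ps_v (ps_mult (ps_const (betS (nexts n j))) (ps_sub (ps_mult (ps_const (betS j)) (X j)) ps_one)) r))"

end

theory Submission
  imports Defs
begin

text \<open>
  The proof rests on the exchange relations of \<open>Q\<^sup>+(v)\<close> with the generators,
  \<open>Q \<beta>\<^sub>j - \<beta>\<^sub>j Q = v (Q \<beta>\<^sub>j\<^sub>-\<^sub>1 - \<beta>\<^sup>*\<^sub>j Q \<beta>\<^sub>j \<beta>\<^sub>j\<^sub>-\<^sub>1)\<close> and
  \<open>Q \<beta>\<^sup>*\<^sub>j - \<beta>\<^sup>*\<^sub>j Q = v \<beta>\<^sup>*\<^sub>j\<^sub>+\<^sub>1 (\<beta>\<^sup>*\<^sub>j Q \<beta>\<^sub>j - Q)\<close>;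
  multiplying them on the right by \<open>Q\<^sup>+(v)\<^sup>-\<^sup>1\<close> gives the stated relations for the conjugated
  generators. The exchange relations are checked coefficientwise on basis vectors. Every word
  in \<open>Q\<^sup>+\<^sub>r\<close> acts as a weighted shift of particles around the ring. In the commutator of a word
  with \<open>\<beta>\<^sub>j\<close> (resp. \<open>\<beta>\<^sup>*\<^sub>j\<close>) only the site-\<open>j\<close> weight changes, so words with
  \<open>\<alpha>\<^sub>j\<^sub>-\<^sub>1 = 0\<close> (resp. \<open>\<alpha>\<^sub>j = 0\<close>) commute; for the others, lowering that entry of \<open>\<alpha>\<close> by one
  matches the terms with those of the right-hand side, up to a factor \<open>-(1 - q\<^sup>2\<^sup>k)\<close> that is
  exactly absorbed by the \<open>q\<close>-Pochhammer symbols in the coefficients of \<open>Q\<^sup>+\<^sub>r\<close>.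
  Uniqueness holds because the relations express the coefficients of order \<open>r + 1\<close> through those
  of order at most \<open>r\<close>.
\<close>

definition op_linear :: "op \<Rightarrow> bool" where
  "op_linear A \<longleftrightarrow> (\<forall>f g. A (\<lambda>m. f m + g m) = (\<lambda>m. A f m + A g m)) \<and>
     (\<forall>c f. A (\<lambda>m. c * f m) = (\<lambda>m. c * A f m))"

lemma op_linear_add: "op_linear A \<Longrightarrow> A (\<lambda>m. f m + g m) m = A f m + A g m"
  unfolding op_linear_def by metis

lemma op_linear_scale: "op_linear A \<Longrightarrow> A (\<lambda>m. c * f m) m = c * A f m"
  unfolding op_linear_def by metis

lemma op_linear_zero: "op_linear A \<Longrightarrow> A (\<lambda>m. 0) m = 0"
  using op_linear_scale[of A 0 "\<lambda>m. 0" m] by simp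

lemma op_linear_diff: "op_linear A \<Longrightarrow> A (\<lambda>m. f m - g m) m = A f m - A g m"
  using op_linear_add[of A f "\<lambda>m. (-1) * g m" m] op_linear_scale[of A "-1" g m] by simp

lemma op_linear_sum: "op_linear A \<Longrightarrow> A (\<lambda>m. \<Sum>i\<in>S. f i m) m = (\<Sum>i\<in>S. A (f i) m)"
proof (induction S arbitrary: m rule: infinite_finite_induct)
  case (insert x F)
  then have "A (\<lambda>m. \<Sum>i\<in>insert x F. f i m) m = A (\<lambda>m. f x m + (\<Sum>i\<in>F. f i m)) m"
    by simp
  also have "\<dots> = A (f x) m + A (\<lambda>m. \<Sum>i\<in>F. f i m) m"
    using insert.prems by (rule op_linear_add)
  finally show ?case using insert by simp
qed (simp_all add: op_linear_zero)

lemma op_linear_id: "op_linear id"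
  unfolding op_linear_def by simp

lemma op_linear_comp: "op_linear A \<Longrightarrow> op_linear B \<Longrightarrow> op_linear (A \<circ> B)"
  unfolding op_linear_def by simp

lemma op_linear_funpow: "op_linear A \<Longrightarrow> op_linear (A ^^ k)"
  by (induction k) (auto simp: op_linear_id op_linear_comp)

lemma op_linear_op_zero: "op_linear op_zero"
  unfolding op_linear_def op_zero_def by simp

lemma op_linear_op_smul: "op_linear A \<Longrightarrow> op_linear (op_smul c A)"
  unfolding op_linear_def op_smul_def by (simp add: algebra_simps)

lemma op_linear_op_sub: "op_linear A \<Longrightarrow> op_linear B \<Longrightarrow> op_linear (op_sub A B)"
  unfolding op_linear_def op_sub_def by (simp add: algebra_simps)

lemma op_linear_op_sum: "(\<And>i. i \<in> S \<Longrightarrow> op_linear (A i)) \<Longrightarrow> op_linear (op_sum S A)"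
  unfolding op_linear_def op_sum_def by (simp add: sum.distrib sum_distrib_left)

lemma op_linear_bet: "op_linear (bet j)"
  unfolding op_linear_def bet_def by simp

lemma op_linear_betS: "op_linear (betS j)"
  unfolding op_linear_def betS_def by (auto simp: algebra_simps fun_eq_iff)

lemma op_linear_foldr_comp:
  "(\<And>i. i \<in> set xs \<Longrightarrow> op_linear (P i)) \<Longrightarrow> op_linear B \<Longrightarrow>
     op_linear (foldr (\<lambda>i acc. P i \<circ> acc) xs B)"
  by (induction xs) (auto simp: op_linear_comp)

lemma op_linear_Qword: "op_linear (Qword n \<alpha>)"
  unfolding Qword_def
  by (intro op_linear_comp op_linear_funpow op_linear_betS op_linear_bet op_linear_foldr_comp op_linear_id)

lemma op_linear_Qcoef: "op_linear (Qcoef n r)"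
  unfolding Qcoef_def by (intro op_linear_op_smul op_linear_op_sum op_linear_Qword)

lemma length_Qinvl: "length (Qinvl n r) = Suc r"
  by (induction r) (auto simp: Let_def)

lemma Qinvl_nth: "k \<le> r \<Longrightarrow> Qinvl n r ! k = Qinv n k"
proof (induction r)
  case (Suc r)
  then show ?case
    by (cases "k = Suc r") (simp_all add: Qinv_def Let_def nth_append length_Qinvl)
qed (simp add: Qinv_def)

lemma Qinv_0: "Qinv n 0 = id"
  by (simp add: Qinv_def)

lemma Qinv_Suc:
  "Qinv n (Suc r) = op_smul (-1) (op_sum {1..Suc r} (\<lambda>k. Qcoef n k \<circ> Qinv n (Suc r - k)))"
proof -
  have "Qinv n (Suc r) = op_smul (-1) (op_sum {1..Suc r} (\<lambda>k. Qcoef n k \<circ> Qinvl n r ! (Suc r - k)))"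
    by (simp add: Qinv_def Let_def nth_append length_Qinvl)
  also have "\<dots> = op_smul (-1) (op_sum {1..Suc r} (\<lambda>k. Qcoef n k \<circ> Qinv n (Suc r - k)))"
    unfolding op_sum_def by (intro arg_cong[where f="op_smul _"] ext sum.cong) (auto simp: Qinvl_nth)
  finally show ?thesis .
qed

lemma op_linear_Qinv: "op_linear (Qinv n r)"
proof (induction r rule: less_induct)
  case (less r)
  then show ?case
    by (cases r) (auto simp: Qinv_0 Qinv_Suc op_linear_id[unfolded id_def]
        intro!: op_linear_op_smul op_linear_op_sum op_linear_comp op_linear_Qcoef)
qed

section \<open>Formal power series with operator coefficients\<close>

definition ps_linear :: "(nat \<Rightarrow> op) \<Rightarrow> bool" where
  "ps_linear A \<longleftrightarrow> (\<forall>k. op_linear (A k))"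

lemma ps_mult_apply: "ps_mult A B r f m = (\<Sum>k\<le>r. A k (B (r - k) f) m)"
  by (simp add: ps_mult_def op_sum_def)

lemma ps_const_apply: "ps_const A r f m = (if r = 0 then A f m else 0)"
  by (simp add: ps_const_def op_zero_def)

lemma ps_sub_apply: "ps_sub A B r f m = A r f m - B r f m"
  by (simp add: ps_sub_def op_sub_def)

lemma ps_v_apply: "ps_v A r f m = (if r = 0 then 0 else A (r - 1) f m)"
  by (simp add: ps_v_def op_zero_def)

lemma ps_mult_assoc:
  assumes "ps_linear A"
  shows "ps_mult (ps_mult A B) C = ps_mult A (ps_mult B C)"
proof (intro ext)
  fix r f m
  have "ps_mult (ps_mult A B) C r f m = (\<Sum>k\<le>r. \<Sum>i\<le>k. A i (B (k - i) (C (r - k) f)) m)"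
    by (simp add: ps_mult_apply)
  also have "\<dots> = (\<Sum>k\<le>r. \<Sum>i\<le>k. (\<lambda>i l. A i (B l (C (r - i - l) f)) m) i (k - i))"
    by (intro sum.cong refl) auto
  also have "\<dots> = (\<Sum>(i, l)\<in>{(i, l). i + l \<le> r}. A i (B l (C (r - i - l) f)) m)"
    by (rule sum.triangle_reindex_eq[symmetric])
  also have "{(i, l). i + l \<le> r} = Sigma {..r} (\<lambda>i. {..r - i})"
    by auto
  also have "(\<Sum>(i, l)\<in>Sigma {..r} (\<lambda>i. {..r - i}). A i (B l (C (r - i - l) f)) m)
      = (\<Sum>i\<le>r. \<Sum>l\<le>r - i. A i (B l (C (r - i - l) f)) m)"
    by (rule sum.Sigma[symmetric]) auto
  also have "\<dots> = ps_mult A (ps_mult B C) r f m"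
    unfolding ps_mult_apply
    by (intro sum.cong refl)
      (simp add: ps_mult_apply diff_diff_left op_linear_sum[OF assms[unfolded ps_linear_def, rule_format]])
  finally show "ps_mult (ps_mult A B) C r f m = ps_mult A (ps_mult B C) r f m" .
qed

lemma ps_mult_const_left: "ps_mult (ps_const A) B r f m = A (B r f) m"
proof -
  have "ps_mult (ps_const A) B r f m = (\<Sum>k\<in>{0}. ps_const A k (B (r - k) f) m)"
    unfolding ps_mult_apply by (rule sum.mono_neutral_right) (auto simp: ps_const_apply)
  then show ?thesis
    by (simp add: ps_const_apply)
qed

lemma ps_mult_const_right: "ps_linear A \<Longrightarrow> ps_mult A (ps_const B) r f = A r (B f)"
proof (rule ext)
  fix m assume "ps_linear A"
  then have "ps_mult A (ps_const B) r f m = (\<Sum>k\<in>{r}. A k (ps_const B (r - k) f) m)"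
    unfolding ps_mult_apply
    by (intro sum.mono_neutral_right) (auto simp: ps_const_def op_zero_def ps_linear_def op_linear_zero)
  then show "ps_mult A (ps_const B) r f m = A r (B f) m"
    by (simp add: ps_const_def)
qed

lemma ps_mult_one_left: "ps_mult ps_one B = B"
  by (intro ext) (simp add: ps_one_def ps_mult_const_left)

lemma ps_mult_one_right: "ps_linear A \<Longrightarrow> ps_mult A ps_one = A"
  by (intro ext) (simp add: ps_one_def ps_mult_const_right)

lemma ps_mult_sub_left: "ps_mult (ps_sub A B) C = ps_sub (ps_mult A C) (ps_mult B C)"
  by (intro ext) (simp add: ps_mult_apply ps_sub_apply sum_subtractf)

lemma ps_mult_sub_right:
  "ps_linear A \<Longrightarrow> ps_mult A (ps_sub B C) = ps_sub (ps_mult A B) (ps_mult A C)"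
  unfolding ps_linear_def
  by (intro ext) (simp add: ps_mult_apply ps_sub_def op_sub_def op_linear_diff sum_subtractf)

lemma ps_mult_v_left: "ps_mult (ps_v A) C = ps_v (ps_mult A C)"
proof (intro ext)
  fix r f m
  show "ps_mult (ps_v A) C r f m = ps_v (ps_mult A C) r f m"
  proof (cases r)
    case (Suc s)
    have "ps_mult (ps_v A) C r f m = (\<Sum>k\<in>Suc ` {..s}. ps_v A k (C (r - k) f) m)"
      unfolding ps_mult_apply Suc atMost_Suc_eq_insert_0 by (subst sum.insert) (auto simp: ps_v_apply)
    also have "\<dots> = (\<Sum>k\<le>s. A k (C (s - k) f) m)"
      by (subst sum.reindex) (auto simp: ps_v_apply Suc)
    finally show ?thesis
      by (simp add: ps_v_apply ps_mult_apply Suc)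
  qed (simp add: ps_mult_apply ps_v_apply)
qed

lemma ps_linear_mult: "ps_linear A \<Longrightarrow> ps_linear B \<Longrightarrow> ps_linear (ps_mult A B)"
  unfolding ps_linear_def ps_mult_def by (auto intro!: op_linear_op_sum op_linear_comp)

lemma ps_linear_const: "op_linear A \<Longrightarrow> ps_linear (ps_const A)"
  unfolding ps_linear_def ps_const_def by (auto simp: op_linear_op_zero)

lemma ps_linear_one: "ps_linear ps_one"
  unfolding ps_one_def by (rule ps_linear_const) (simp add: op_linear_id)

lemma ps_linear_sub: "ps_linear A \<Longrightarrow> ps_linear B \<Longrightarrow> ps_linear (ps_sub A B)"
  unfolding ps_linear_def ps_sub_def by (auto intro!: op_linear_op_sub)

lemma ps_linear_v: "ps_linear A \<Longrightarrow> ps_linear (ps_v A)"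
  unfolding ps_linear_def ps_v_def by (auto simp: op_linear_op_zero)

lemma ps_linear_Qser: "ps_linear (Qser n)"
  unfolding ps_linear_def Qser_def by (simp add: op_linear_Qcoef)

lemma ps_linear_Qinv: "ps_linear (Qinv n)"
  unfolding ps_linear_def by (simp add: op_linear_Qinv)

lemma comps_0: "comps n 0 = {\<lambda>_. 0}"
  unfolding comps_def by (auto simp: fun_eq_iff) (metis atLeastAtMost_iff)

lemma Qcoef_0: "Qcoef n 0 = id"
proof -
  have foldr_id: "foldr (\<lambda>i. (\<circ>) id) xs id = id" for xs :: "nat list"
    by (induction xs) auto
  show ?thesis
    unfolding Qcoef_def comps_0 Qword_def
    by (simp add: op_smul_def op_sum_def qpoch_def foldr_id fun_eq_iff)
qed

lemma Qser_Suc_apply: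
  "ps_mult (Qser n) B (Suc s) f m = B (Suc s) f m + (\<Sum>k\<in>{1..Suc s}. Qcoef n k (B (Suc s - k) f) m)"
proof -
  have "{..Suc s} = insert 0 {1..Suc s}"
    by auto
  then show ?thesis
    unfolding ps_mult_apply by (simp add: Qser_def Qcoef_0)
qed

lemma Qser_Qinv: "ps_mult (Qser n) (Qinv n) = ps_one"
proof (intro ext)
  fix r f m
  show "ps_mult (Qser n) (Qinv n) r f m = ps_one r f m"
  proof (cases r)
    case (Suc s)
    show ?thesis
      unfolding Suc Qser_Suc_apply by (simp add: Qinv_Suc op_smul_def op_sum_def ps_one_def ps_const_apply)
  qed (simp add: ps_mult_apply Qser_def Qcoef_0 Qinv_0 ps_one_def ps_const_apply)
qed

lemma Qinv_Qser: "ps_mult (Qinv n) (Qser n) = ps_one"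
proof -
  define E where "E = ps_sub (ps_mult (Qinv n) (Qser n)) ps_one"
  have "ps_mult (Qser n) E = ps_sub (ps_mult (ps_mult (Qser n) (Qinv n)) (Qser n)) (ps_mult (Qser n) ps_one)"
    unfolding E_def by (simp add: ps_mult_sub_right ps_mult_assoc ps_linear_Qser)
  then have QE: "ps_mult (Qser n) E r f m = 0" for r f m
    by (simp add: Qser_Qinv ps_mult_one_left ps_mult_one_right ps_linear_Qser ps_sub_apply)
  have "E r f = (\<lambda>m. 0)" for r f
  proof (induction r rule: less_induct)
    case (less r)
    show ?case
    proof (cases r)
      case 0
      then show ?thesis using QE[of 0 f] by (auto simp: ps_mult_apply Qser_def Qcoef_0)
    next
      case (Suc s)
      have "(\<Sum>k\<in>{1..r}. Qcoef n k (E (r - k) f) m) = 0" for m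
        using less Suc by (intro sum.neutral ballI) (auto simp: op_linear_zero op_linear_Qcoef)
      then show ?thesis using QE[of r f] Suc by (auto simp: Qser_Suc_apply)
    qed
  qed
  then show ?thesis
    unfolding E_def by (intro ext) (simp add: ps_sub_apply fun_eq_iff)
qed

lemma ps_mult_cancel_right:
  assumes "ps_linear L" "ps_linear R" "ps_mult Q P = ps_one" "ps_mult L Q = ps_mult R Q"
  shows "L = R"
proof -
  have "L = ps_mult (ps_mult L Q) P"
    using assms(1,3) by (simp add: ps_mult_assoc ps_mult_one_right)
  also have "\<dots> = R"
    using assms(2,3,4) by (simp add: ps_mult_assoc ps_mult_one_right)
  finally show ?thesis .
qed

lemma ps_mult_conj_right:
  assumes "ps_linear Q" "op_linear b" "ps_mult P Q = ps_one"
  shows "ps_mult (ps_mult (ps_mult Q (ps_const b)) P) Q = ps_mult Q (ps_const b)"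
  using assms by (simp add: ps_mult_assoc ps_linear_mult ps_linear_const ps_mult_one_right)

lemma conj_annihilator_relation:
  assumes lQ: "ps_linear Q" and lP: "ps_linear P"
    and QP: "ps_mult Q P = ps_one" and PQ: "ps_mult P Q = ps_one"
    and lb: "op_linear bj" "op_linear bp" "op_linear bsj"
    and Q0: "Q 0 = id"
    and comm: "\<And>s f m. Q (Suc s) (bj f) m - bj (Q (Suc s) f) m
      = Q s (bp f) m - bsj (Q s (bj (bp f))) m"
  defines "X \<equiv> ps_mult (ps_mult Q (ps_const bj)) P"
    and "Xp \<equiv> ps_mult (ps_mult Q (ps_const bp)) P"
  shows "ps_sub X (ps_const bj) = ps_v (ps_mult (ps_sub ps_one (ps_mult (ps_const bsj) X)) Xp)"
proof (rule ps_mult_cancel_right[OF _ _ QP])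
  have lX: "ps_linear X" "ps_linear Xp"
    unfolding X_def Xp_def using lQ lP lb by (auto intro!: ps_linear_mult ps_linear_const)
  then show "ps_linear (ps_sub X (ps_const bj))"
    "ps_linear (ps_v (ps_mult (ps_sub ps_one (ps_mult (ps_const bsj) X)) Xp))"
    using lb by (auto intro!: ps_linear_sub ps_linear_const ps_linear_v ps_linear_mult ps_linear_one)
  have XQ: "ps_mult X Q = ps_mult Q (ps_const bj)" and XpQ: "ps_mult Xp Q = ps_mult Q (ps_const bp)"
    unfolding X_def Xp_def using lQ lb PQ by (simp_all add: ps_mult_conj_right)
  have lS: "ps_linear (ps_sub Q (ps_mult (ps_const bsj) (ps_mult Q (ps_const bj))))"
    using lQ lb by (intro ps_linear_sub ps_linear_mult ps_linear_const)
  have "ps_mult (ps_v (ps_mult (ps_sub ps_one (ps_mult (ps_const bsj) X)) Xp)) Q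
      = ps_v (ps_mult (ps_mult (ps_sub ps_one (ps_mult (ps_const bsj) X)) Q) (ps_const bp))"
    using lX lb
    by (simp add: ps_mult_v_left ps_mult_assoc XpQ ps_linear_sub ps_linear_one ps_linear_mult ps_linear_const)
  also have "ps_mult (ps_sub ps_one (ps_mult (ps_const bsj) X)) Q
      = ps_sub Q (ps_mult (ps_const bsj) (ps_mult Q (ps_const bj)))"
    using lb by (simp add: ps_mult_sub_left ps_mult_one_left ps_mult_assoc ps_linear_const XQ)
  also have "ps_v (ps_mult (ps_sub Q (ps_mult (ps_const bsj) (ps_mult Q (ps_const bj)))) (ps_const bp))
      = ps_sub (ps_mult Q (ps_const bj)) (ps_mult (ps_const bj) Q)"
  proof (intro ext)
    fix r f m
    show "ps_v (ps_mult (ps_sub Q (ps_mult (ps_const bsj) (ps_mult Q (ps_const bj)))) (ps_const bp)) r f m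
      = ps_sub (ps_mult Q (ps_const bj)) (ps_mult (ps_const bj) Q) r f m"
      using comm by (cases r) (simp_all add: ps_sub_apply ps_v_apply ps_mult_const_right[OF lS]
          ps_mult_const_right[OF lQ] ps_mult_const_left Q0)
  qed
  also have "\<dots> = ps_mult (ps_sub X (ps_const bj)) Q"
    by (simp add: ps_mult_sub_left XQ)
  finally show "ps_mult (ps_sub X (ps_const bj)) Q
      = ps_mult (ps_v (ps_mult (ps_sub ps_one (ps_mult (ps_const bsj) X)) Xp)) Q" ..
qed

lemma conj_creator_relation:
  assumes lQ: "ps_linear Q" and lP: "ps_linear P"
    and QP: "ps_mult Q P = ps_one" and PQ: "ps_mult P Q = ps_one"
    and lb: "op_linear bj" "op_linear bsj" "op_linear bst"
    and Q0: "Q 0 = id"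
    and comm: "\<And>s f m. Q (Suc s) (bsj f) m - bsj (Q (Suc s) f) m
      = bst (\<lambda>m. bsj (Q s (bj f)) m - Q s f m) m"
  defines "X \<equiv> ps_mult (ps_mult Q (ps_const bj)) P"
    and "Y \<equiv> ps_mult (ps_mult Q (ps_const bsj)) P"
  shows "ps_sub Y (ps_const bsj) = ps_v (ps_mult (ps_const bst) (ps_sub (ps_mult (ps_const bsj) X) ps_one))"
proof (rule ps_mult_cancel_right[OF _ _ QP])
  have lX: "ps_linear X" "ps_linear Y"
    unfolding X_def Y_def using lQ lP lb by (auto intro!: ps_linear_mult ps_linear_const)
  then show "ps_linear (ps_sub Y (ps_const bsj))"
    "ps_linear (ps_v (ps_mult (ps_const bst) (ps_sub (ps_mult (ps_const bsj) X) ps_one)))"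
    using lb by (auto intro!: ps_linear_sub ps_linear_const ps_linear_v ps_linear_mult ps_linear_one)
  have XQ: "ps_mult X Q = ps_mult Q (ps_const bj)" and YQ: "ps_mult Y Q = ps_mult Q (ps_const bsj)"
    unfolding X_def Y_def using lQ lb PQ by (simp_all add: ps_mult_conj_right)
  have "ps_mult (ps_v (ps_mult (ps_const bst) (ps_sub (ps_mult (ps_const bsj) X) ps_one))) Q
      = ps_v (ps_mult (ps_const bst) (ps_sub (ps_mult (ps_const bsj) (ps_mult Q (ps_const bj))) Q))"
    using lX lb
    by (simp add: ps_mult_v_left ps_mult_assoc ps_mult_sub_left ps_mult_one_left XQ
        ps_linear_sub ps_linear_one ps_linear_mult ps_linear_const)
  also have "\<dots> = ps_sub (ps_mult Q (ps_const bsj)) (ps_mult (ps_const bsj) Q)"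
  proof (intro ext)
    fix r f m
    show "ps_v (ps_mult (ps_const bst) (ps_sub (ps_mult (ps_const bsj) (ps_mult Q (ps_const bj))) Q)) r f m
      = ps_sub (ps_mult Q (ps_const bsj)) (ps_mult (ps_const bsj) Q) r f m"
      using comm by (cases r) (simp_all add: ps_sub_def op_sub_def ps_v_apply
          ps_mult_const_right[OF lQ] ps_mult_const_left Q0)
  qed
  also have "\<dots> = ps_mult (ps_sub Y (ps_const bsj)) Q"
    by (simp add: ps_mult_sub_left YQ)
  finally show "ps_mult (ps_sub Y (ps_const bsj)) Q
      = ps_mult (ps_v (ps_mult (ps_const bst) (ps_sub (ps_mult (ps_const bsj) X) ps_one))) Q" ..
qed

section \<open>Words of \<open>Q\<^sup>+\<close> as weighted shifts\<close>

definition qfall :: "nat \<Rightarrow> nat \<Rightarrow> K" where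
  "qfall x a = (if a \<le> x then (\<Prod>i<a. 1 - qq ^ (2 * (x - i))) else 0)"

lemma qfall_0 [simp]: "qfall x 0 = 1"
  by (simp add: qfall_def)

lemma qfall_eq_0: "x < a \<Longrightarrow> qfall x a = 0"
  by (simp add: qfall_def)

lemma qfall_Suc: "qfall x (Suc a) = (if x = 0 then 0 else (1 - qq ^ (2 * x)) * qfall (x - 1) a)"
proof (cases "Suc a \<le> x")
  case True
  have "(\<Prod>i<Suc a. 1 - qq ^ (2 * (x - i))) = (1 - qq ^ (2 * x)) * (\<Prod>i<a. 1 - qq ^ (2 * (x - 1 - i)))"
    by (simp only: prod.lessThan_Suc_shift) simp
  then show ?thesis
    using True by (simp add: qfall_def)
qed (auto simp: qfall_def)

lemma qfall_Suc_right:
  "qfall x (Suc a) = (if a < x then qfall x a * (1 - qq ^ (2 * (x - a))) else 0)"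
  by (simp add: qfall_def)

lemma qfall_Suc_Suc: "qfall (Suc x) (Suc a) = (1 - qq ^ (2 * Suc x)) * qfall x a"
  by (simp add: qfall_Suc)

lemma bet_pow: "(bet j ^^ k) f m = f (m(j := m j + k))"
  by (induction k arbitrary: m) (auto simp: bet_def)

lemma betS_pow: "(betS j ^^ k) f m = qfall (m j) k * f (m(j := m j - k))"
proof (induction k arbitrary: m)
  case (Suc k)
  have "(betS j ^^ Suc k) f m
      = (if m j = 0 then 0 else (1 - qq ^ (2 * m j)) * (betS j ^^ k) f (m(j := m j - 1)))"
    by (simp only: funpow.simps comp_apply betS_def)
  also have "\<dots> = qfall (m j) (Suc k) * f (m(j := m j - Suc k))"
  proof (cases "m j = 0")
    case False
    have "(m(j := m j - 1))(j := (m(j := m j - 1)) j - k) = m(j := m j - Suc k)"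
      by simp
    then show ?thesis
      using False by (simp only: Suc.IH qfall_Suc) simp
  qed (simp add: qfall_Suc)
  finally show ?case .
qed simp

lemma bet_betS_pow:
  assumes "i \<noteq> j"
  shows "((bet i \<circ> betS j) ^^ k) f m = qfall (m j) k * f (m(i := m i + k, j := m j - k))"
proof (induction k arbitrary: m)
  case (Suc k)
  let ?m' = "m(i := m i + 1, j := m j - 1)"
  have "((bet i \<circ> betS j) ^^ Suc k) f m
      = (if m j = 0 then 0 else (1 - qq ^ (2 * m j)) * ((bet i \<circ> betS j) ^^ k) f ?m')"
    using assms by (simp add: bet_def betS_def)
  also have "\<dots> = qfall (m j) (Suc k) * f (m(i := m i + Suc k, j := m j - Suc k))"
  proof (cases "m j = 0")
    case False
    have "?m'(i := ?m' i + k, j := ?m' j - k) = m(i := m i + Suc k, j := m j - Suc k)"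
      using assms by (auto simp: fun_eq_iff)
    then show ?thesis
      using False by (simp only: Suc.IH qfall_Suc) simp
  qed (simp add: qfall_Suc)
  finally show ?case .
qed simp

definition chain_shift :: "nat \<Rightarrow> (nat \<Rightarrow> nat) \<Rightarrow> nat \<Rightarrow> cfg \<Rightarrow> cfg" where
  "chain_shift n \<alpha> a m = (\<lambda>t. (if a < t \<and> t \<le> n then m t - \<alpha> (t - 1) else m t)
     + (if a \<le> t \<and> t < n then \<alpha> t else 0))"

lemma foldr_bet_betS_pow_apply:
  assumes "1 \<le> a" "a \<le> n"
  shows "foldr (\<lambda>i acc. ((bet i \<circ> betS (Suc i)) ^^ \<alpha> i) \<circ> acc) [a..<n] id f m
    = (\<Prod>i\<in>{a..<n}. qfall (m (Suc i)) (\<alpha> i)) * f (chain_shift n \<alpha> a m)"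
  using assms
proof (induction "n - a" arbitrary: a m)
  case 0
  then have "chain_shift n \<alpha> a m = m"
    by (auto simp: chain_shift_def fun_eq_iff)
  with 0 show ?case by simp
next
  case (Suc d)
  then have an: "a < n" by simp
  define m' where "m' = m(a := m a + \<alpha> a, Suc a := m (Suc a) - \<alpha> a)"
  have IH: "foldr (\<lambda>i acc. ((bet i \<circ> betS (Suc i)) ^^ \<alpha> i) \<circ> acc) [Suc a..<n] id f m'
    = (\<Prod>i\<in>{Suc a..<n}. qfall (m (Suc i)) (\<alpha> i)) * f (chain_shift n \<alpha> (Suc a) m')"
    using Suc by (simp add: m'_def)
  have "chain_shift n \<alpha> (Suc a) m' t = chain_shift n \<alpha> a m t" for t
    using an by (cases "t = Suc a") (auto simp: chain_shift_def m'_def)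
  then have "chain_shift n \<alpha> (Suc a) m' = chain_shift n \<alpha> a m"
    by blast
  moreover have "{a..<n} = insert a {Suc a..<n}"
    using an by auto
  ultimately show ?case
    using an by (simp add: upt_conv_Cons bet_betS_pow IH m'_def[symmetric] del: fun_upd_apply)
qed

definition Qword_weight :: "nat \<Rightarrow> (nat \<Rightarrow> nat) \<Rightarrow> cfg \<Rightarrow> K" where
  "Qword_weight n \<alpha> m = (\<Prod>i\<in>{1..n}. qfall (m i) (\<alpha> (prevs n i)))"

definition Qword_shift :: "nat \<Rightarrow> (nat \<Rightarrow> nat) \<Rightarrow> cfg \<Rightarrow> cfg" where
  "Qword_shift n \<alpha> m = (\<lambda>i. if i \<in> {1..n} then m i - \<alpha> (prevs n i) + \<alpha> i else m i)"

lemma Qword_apply: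
  assumes n: "1 \<le> n"
  shows "Qword n \<alpha> f m = Qword_weight n \<alpha> m * f (Qword_shift n \<alpha> m)"
proof -
  define m1 where "m1 = m(1 := m 1 - \<alpha> n)"
  have weight: "qfall (m 1) (\<alpha> n) * (\<Prod>i\<in>{1..<n}. qfall (m (Suc i)) (\<alpha> i)) = Qword_weight n \<alpha> m"
  proof -
    have s: "{1..n} = insert 1 (Suc ` {1..<n})"
      using n by (auto simp: image_iff)
    have "(\<Prod>i\<in>Suc ` {1..<n}. qfall (m i) (\<alpha> (prevs n i))) = (\<Prod>i\<in>{1..<n}. qfall (m (Suc i)) (\<alpha> i))"
      by (subst prod.reindex) (auto simp: prevs_def)
    then show ?thesis
      unfolding Qword_weight_def s by (subst prod.insert) (auto simp: prevs_def)
  qed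
  have "Qword n \<alpha> f m = qfall (m 1) (\<alpha> n) * ((\<Prod>i\<in>{1..<n}. qfall (m1 (Suc i)) (\<alpha> i)) *
       f ((chain_shift n \<alpha> 1 m1)(n := chain_shift n \<alpha> 1 m1 n + \<alpha> n)))"
    by (simp only: Qword_def comp_apply betS_pow foldr_bet_betS_pow_apply[OF order_refl n] bet_pow m1_def)
  also have "(\<Prod>i\<in>{1..<n}. qfall (m1 (Suc i)) (\<alpha> i)) = (\<Prod>i\<in>{1..<n}. qfall (m (Suc i)) (\<alpha> i))"
    by (intro prod.cong) (auto simp: m1_def)
  also have "(chain_shift n \<alpha> 1 m1)(n := chain_shift n \<alpha> 1 m1 n + \<alpha> n) = Qword_shift n \<alpha> m"
    using n by (auto simp: fun_eq_iff chain_shift_def m1_def Qword_shift_def prevs_def)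
  finally show ?thesis
    by (simp add: weight[symmetric] mult.assoc)
qed

section \<open>Exchange relations of the words with the generators\<close>

lemma qfall_Suc_diff:
  "qfall x (Suc a) - qfall (Suc x) (Suc a) = - (1 - qq ^ (2 * Suc a)) * (qfall x a - qfall x (Suc a))"
proof -
  consider "a < x" | "a = x" | "x < a"
    by linarith
  then show ?thesis
  proof cases
    case 1
    have "2 * (x - a) + 2 * Suc a = 2 * Suc x"
      using 1 by simp
    then have e: "qq ^ (2 * Suc x) = qq ^ (2 * (x - a)) * qq ^ (2 * Suc a)"
      by (simp only: power_add[symmetric])
    have h1: "qfall x (Suc a) = qfall x a * (1 - qq ^ (2 * (x - a)))"
      using 1 by (simp add: qfall_Suc_right)
    have h2: "qfall (Suc x) (Suc a) = (1 - qq ^ (2 * (x - a)) * qq ^ (2 * Suc a)) * qfall x a"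
      by (simp only: qfall_Suc_Suc e)
    have r: "\<And>w Q1 Q2::K. w * (1 - Q1) - (1 - Q1 * Q2) * w = - (1 - Q2) * (w - w * (1 - Q1))"
      by (simp add: algebra_simps)
    show ?thesis
      by (simp only: h1 h2 r)
  next
    case 2
    have "qfall x (Suc x) = 0"
      by (simp add: qfall_eq_0)
    then show ?thesis
      unfolding 2 by (simp only: qfall_Suc_Suc) (simp add: algebra_simps)
  qed (simp add: qfall_Suc_Suc qfall_eq_0)
qed

lemma qfall_shift_diff:
  "qfall x a * (1 - qq ^ (2 * (x - a + Suc b))) - qfall x (Suc a)
    = - (1 - qq ^ (2 * Suc b)) * (qfall x (Suc a) - qfall x a)"
proof -
  consider "a < x" | "a = x" | "x < a"
    by linarith
  then show ?thesis
  proof cases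
    case 1
    have e: "qq ^ (2 * (x - a + Suc b)) = qq ^ (2 * (x - a)) * qq ^ (2 * Suc b)"
      by (simp only: power_add[symmetric] add_mult_distrib2)
    have r: "\<And>w Q1 Q2::K. w * (1 - Q1 * Q2) - w * (1 - Q1) = - (1 - Q2) * (w * (1 - Q1) - w)"
      by (simp add: algebra_simps)
    show ?thesis
      using 1 by (simp only: qfall_Suc_right e if_True r)
  next
    case 2
    have "qfall x (Suc x) = 0"
      by (simp add: qfall_eq_0)
    then show ?thesis
      unfolding 2 by simp (simp add: algebra_simps)
  qed (simp add: qfall_eq_0)
qed

lemma prevs_in: "1 \<le> n \<Longrightarrow> i \<in> {1..n} \<Longrightarrow> prevs n i \<in> {1..n}"
  by (auto simp: prevs_def)

lemma nexts_in: "1 \<le> n \<Longrightarrow> i \<in> {1..n} \<Longrightarrow> nexts n i \<in> {1..n}"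
  by (auto simp: nexts_def)

lemma prevs_eq_iff: "i \<in> {1..n} \<Longrightarrow> k \<in> {1..n} \<Longrightarrow> prevs n i = prevs n k \<longleftrightarrow> i = k"
  by (auto simp: prevs_def)

lemma prevs_nexts: "i \<in> {1..n} \<Longrightarrow> prevs n (nexts n i) = i"
  by (auto simp: prevs_def nexts_def)

lemma prevs_eq_self_iff: "i \<in> {1..n} \<Longrightarrow> prevs n i = i \<longleftrightarrow> n = 1"
  by (auto simp: prevs_def)

lemma nexts_eq_self_iff: "i \<in> {1..n} \<Longrightarrow> nexts n i = i \<longleftrightarrow> n = 1"
  by (auto simp: nexts_def)

lemma Qword_weight_remove:
  "j \<in> {1..n} \<Longrightarrow>
    Qword_weight n \<beta> mm = qfall (mm j) (\<beta> (prevs n j)) * (\<Prod>i\<in>{1..n}-{j}. qfall (mm i) (\<beta> (prevs n i)))"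
  unfolding Qword_weight_def by (subst prod.remove[of _ j]) auto

lemma Qword_weight_local:
  assumes j: "j \<in> {1..n}" and "\<And>i. i \<noteq> j \<Longrightarrow> mm i = m i" "\<And>i. i \<noteq> prevs n j \<Longrightarrow> \<beta> i = \<alpha> i"
  shows "Qword_weight n \<beta> mm
    = qfall (mm j) (\<beta> (prevs n j)) * (\<Prod>i\<in>{1..n}-{j}. qfall (m i) (\<alpha> (prevs n i)))"
  unfolding Qword_weight_remove[OF j] using assms by (auto simp: prevs_eq_iff intro!: prod.cong)

lemma Qword_weight_local_pair:
  assumes n: "2 \<le> n" and j: "j \<in> {1..n}"
    and "\<And>i. i \<noteq> j \<Longrightarrow> i \<noteq> nexts n j \<Longrightarrow> mm i = m i" "\<And>i. i \<noteq> prevs n j \<Longrightarrow> i \<noteq> j \<Longrightarrow> \<beta> i = \<alpha> i"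
  shows "Qword_weight n \<beta> mm = qfall (mm j) (\<beta> (prevs n j)) * qfall (mm (nexts n j)) (\<beta> j)
    * (\<Prod>i\<in>{1..n}-{j}-{nexts n j}. qfall (m i) (\<alpha> (prevs n i)))"
proof -
  let ?t = "nexts n j"
  have t: "?t \<in> {1..n}" "?t \<noteq> j" "prevs n ?t = j"
    using n j nexts_in[of n j] nexts_eq_self_iff[OF j] prevs_nexts[OF j] by auto
  have "(\<Prod>i\<in>{1..n}-{j}. qfall (mm i) (\<beta> (prevs n i)))
      = qfall (mm ?t) (\<beta> j) * (\<Prod>i\<in>{1..n}-{j}-{?t}. qfall (m i) (\<alpha> (prevs n i)))"
    using t assms prevs_eq_iff[OF _ j] prevs_eq_iff[OF _ t(1)]
    by (subst prod.remove[of _ ?t]) (auto simp: prevs_nexts[OF j] intro!: prod.cong)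
  then show ?thesis
    by (simp add: Qword_weight_remove[OF j] mult.assoc)
qed

lemma Qword_bet_commute:
  assumes n: "1 \<le> n" and j: "j \<in> {1..n}" and z: "\<alpha> (prevs n j) = 0"
  shows "Qword n \<alpha> (bet j f) m = bet j (Qword n \<alpha> f) m"
proof -
  have "Qword_weight n \<alpha> (m(j := Suc (m j))) = Qword_weight n \<alpha> m"
    using j z by (simp add: Qword_weight_local[OF j, of _ m])
  moreover have "(Qword_shift n \<alpha> m)(j := Suc (Qword_shift n \<alpha> m j)) = Qword_shift n \<alpha> (m(j := Suc (m j)))"
    using j z by (auto simp: fun_eq_iff Qword_shift_def)
  ultimately show ?thesis
    by (simp add: Qword_apply[OF n] bet_def)
qed

lemma Qword_shift_bet_commutator:
  fixes \<alpha> :: "nat \<Rightarrow> nat" and m :: cfg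
  assumes n: "1 \<le> n" and j: "j \<in> {1..n}"
  defines "p \<equiv> prevs n j"
  defines "\<alpha>' \<equiv> \<alpha>(p := Suc (\<alpha> p))"
  defines "U \<equiv> Qword_shift n \<alpha>' (m(j := Suc (m j)))"
  shows "\<alpha> p < m j \<Longrightarrow> bet j f (Qword_shift n \<alpha>' m) = f U"
    and "\<alpha> p \<le> m j \<Longrightarrow> bet p f (Qword_shift n \<alpha> m) = f U"
    and "\<alpha> p < m j \<Longrightarrow> bet j (bet p f) (Qword_shift n \<alpha> (m(j := m j - 1))) = f U"
proof -
  have pin: "p \<in> {1..n}"
    unfolding p_def by (rule prevs_in[OF n j])
  have pj: "prevs n j = p"
    by (simp add: p_def)
  have pne: "i \<in> {1..n} \<Longrightarrow> i \<noteq> j \<Longrightarrow> prevs n i \<noteq> p" for i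
    using j by (simp add: p_def prevs_eq_iff)
  have pp: "p \<noteq> j \<Longrightarrow> prevs n p \<noteq> p"
    using pin prevs_eq_self_iff[OF j] prevs_eq_self_iff[OF pin] p_def by auto
  have n1: "p = j \<Longrightarrow> n = 1"
    using prevs_eq_self_iff[OF j] p_def by simp
  show "\<alpha> p < m j \<Longrightarrow> bet j f (Qword_shift n \<alpha>' m) = f U"
    unfolding bet_def using j pj
    by (intro arg_cong[where f = f]) (auto simp: fun_eq_iff U_def Qword_shift_def \<alpha>'_def pne)
  show "\<alpha> p \<le> m j \<Longrightarrow> bet p f (Qword_shift n \<alpha> m) = f U"
    unfolding bet_def
  proof (intro arg_cong[where f = f])
    show "\<alpha> p \<le> m j \<Longrightarrow> (Qword_shift n \<alpha> m)(p := Suc (Qword_shift n \<alpha> m p)) = U"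
    proof (cases "p = j")
      case True
      then show "\<alpha> p \<le> m j \<Longrightarrow> ?thesis" using n1[OF True] j
        by (auto simp: fun_eq_iff U_def Qword_shift_def \<alpha>'_def p_def prevs_def)
    qed (use j pin pp in \<open>auto simp: fun_eq_iff U_def Qword_shift_def \<alpha>'_def pne p_def[symmetric]\<close>)
  qed
  show "\<alpha> p < m j \<Longrightarrow> bet j (bet p f) (Qword_shift n \<alpha> (m(j := m j - 1))) = f U"
    unfolding bet_def
  proof (intro arg_cong[where f = f])
    let ?g = "(Qword_shift n \<alpha> (m(j := m j - 1)))(j := Suc (Qword_shift n \<alpha> (m(j := m j - 1)) j))"
    show "\<alpha> p < m j \<Longrightarrow> ?g(p := Suc (?g p)) = U"
    proof (cases "p = j")
      case True
      then show "\<alpha> p < m j \<Longrightarrow> ?thesis" using n1[OF True] j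
        by (auto simp: fun_eq_iff U_def Qword_shift_def \<alpha>'_def p_def prevs_def)
    qed (use j pin pp in \<open>auto simp: fun_eq_iff U_def Qword_shift_def \<alpha>'_def pne p_def[symmetric]\<close>)
  qed
qed

lemma Qword_bet_commutator:
  assumes n: "1 \<le> n" and j: "j \<in> {1..n}"
  defines "p \<equiv> prevs n j"
  shows "Qword n (\<alpha>(p := Suc (\<alpha> p))) (bet j f) m - bet j (Qword n (\<alpha>(p := Suc (\<alpha> p))) f) m
    = - (1 - qq ^ (2 * Suc (\<alpha> p))) * (Qword n \<alpha> (bet p f) m - betS j (Qword n \<alpha> (bet j (bet p f))) m)"
proof -
  define \<alpha>' where "\<alpha>' = \<alpha>(p := Suc (\<alpha> p))"
  define x where "x = m j"
  define mj where "mj = m(j := x - 1)"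
  define a where "a = \<alpha> p"
  define R where "R = (\<Prod>i\<in>{1..n}-{j}. qfall (m i) (\<alpha> (prevs n i)))"
  define U where "U = Qword_shift n \<alpha>' (m(j := Suc (m j)))"
  note shift = Qword_shift_bet_commutator[OF n j, of \<alpha> m, folded p_def]
  have weight: "Qword_weight n \<beta> mm = qfall (mm j) (\<beta> p) * R"
    if "\<And>i. i \<noteq> j \<Longrightarrow> mm i = m i" "\<And>i. i \<noteq> p \<Longrightarrow> \<beta> i = \<alpha> i" for \<beta> mm
    using Qword_weight_local[OF j that[unfolded p_def]] unfolding R_def p_def .
  have "Qword n \<alpha>' (bet j f) m = qfall x (Suc a) * R * f U"
    using weight[of m \<alpha>'] shift(1)
    by (cases "a < x") (simp_all add: Qword_apply[OF n] \<alpha>'_def x_def a_def U_def qfall_eq_0)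
  moreover have "bet j (Qword n \<alpha>' f) m = qfall (Suc x) (Suc a) * R * f U"
    using weight[of "m(j := Suc (m j))" \<alpha>']
    by (simp add: Qword_apply[OF n] bet_def \<alpha>'_def x_def a_def U_def)
  moreover have "Qword n \<alpha> (bet p f) m = qfall x a * R * f U"
    using weight[of m \<alpha>] shift(2)
    by (cases "a \<le> x") (simp_all add: Qword_apply[OF n] \<alpha>'_def x_def a_def U_def qfall_eq_0)
  moreover have "betS j (Qword n \<alpha> (bet j (bet p f))) m = qfall x (Suc a) * R * f U"
  proof -
    have "Qword n \<alpha> (bet j (bet p f)) mj = qfall (x - 1) a * R * f U" if "a < x"
      using weight[of mj \<alpha>] shift(3) that
      by (simp add: Qword_apply[OF n] mj_def \<alpha>'_def x_def a_def U_def)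
    moreover have "qfall (x - 1) a = 0" if "0 < x" "\<not> a < x"
      using that by (simp add: qfall_eq_0)
    moreover have "Qword n \<alpha> g mj = qfall (x - 1) a * (R * g (Qword_shift n \<alpha> mj))" for g
      using weight[of mj \<alpha>] by (simp add: Qword_apply[OF n] mj_def x_def a_def)
    ultimately show ?thesis
      unfolding betS_def x_def[symmetric] mj_def[symmetric]
      by (cases "a < x") (auto simp: qfall_Suc qfall_eq_0)
  qed
  ultimately show ?thesis
    unfolding \<alpha>'_def[symmetric] unfolding a_def[symmetric]
    using arg_cong[OF qfall_Suc_diff[of x a], of "\<lambda>z. z * (R * f U)"] by (simp add: algebra_simps)
qed

lemma Qword_betS_commute:
  assumes n: "1 \<le> n" and j: "j \<in> {1..n}" and z: "\<alpha> j = 0"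
  shows "Qword n \<alpha> (betS j f) m = betS j (Qword n \<alpha> f) m"
proof -
  define x where "x = m j"
  define a where "a = \<alpha> (prevs n j)"
  define R where "R = (\<Prod>i\<in>{1..n}-{j}. qfall (m i) (\<alpha> (prevs n i)))"
  define mj where "mj = m(j := x - 1)"
  have c1: "Qword_weight n \<alpha> m = qfall x a * R"
    by (simp add: Qword_weight_remove[OF j] x_def a_def R_def)
  have c2: "Qword_weight n \<alpha> mj = qfall (x - 1) a * R"
    by (simp add: Qword_weight_remove[OF j] x_def a_def R_def mj_def)
  have wj: "Qword_shift n \<alpha> m j = x - a"
    using j z by (simp add: Qword_shift_def x_def a_def)
  have shift: "(Qword_shift n \<alpha> m)(j := x - Suc a) = Qword_shift n \<alpha> mj"
    using j z by (auto simp: Qword_shift_def fun_eq_iff x_def a_def mj_def)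
  have "betS j (Qword n \<alpha> f) m = qfall x (Suc a) * R * f (Qword_shift n \<alpha> mj)"
    unfolding betS_def x_def[symmetric] mj_def[symmetric] by (simp add: Qword_apply[OF n] c2 qfall_Suc)
  moreover have "Qword n \<alpha> (betS j f) m = qfall x (Suc a) * R * f (Qword_shift n \<alpha> mj)"
  proof (cases "a < x")
    case True
    then show ?thesis
      by (simp add: Qword_apply[OF n] betS_def c1 wj shift qfall_Suc_right)
  qed (simp add: Qword_apply[OF n] betS_def c1 wj qfall_eq_0)
  ultimately show ?thesis
    by simp
qed

lemma Qword_shift_betS_commutator_ring:
  fixes \<alpha> :: "nat \<Rightarrow> nat" and m :: cfg
  assumes n: "2 \<le> n" and j: "j \<in> {1..n}"
  defines "t \<equiv> nexts n j" and "p \<equiv> prevs n j"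
  defines "\<alpha>' \<equiv> \<alpha>(j := Suc (\<alpha> j))" and "m' \<equiv> m(t := m t - 1)"
  shows "\<alpha> p \<le> m j \<Longrightarrow> \<alpha> j < m t \<Longrightarrow>
      (Qword_shift n \<alpha>' m)(j := Qword_shift n \<alpha>' m j - 1) = Qword_shift n \<alpha> m'"
    and "\<alpha> p < m j \<Longrightarrow> \<alpha> j < m t \<Longrightarrow> Qword_shift n \<alpha>' (m(j := m j - 1)) = Qword_shift n \<alpha> m'"
    and "\<alpha> p < m j \<Longrightarrow> \<alpha> j < m t \<Longrightarrow>
      (Qword_shift n \<alpha> (m'(j := m' j - 1)))(j := Suc (Qword_shift n \<alpha> (m'(j := m' j - 1)) j))
        = Qword_shift n \<alpha> m'"
proof -
  have n1: "1 \<le> n"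
    using n by simp
  have tin: "t \<in> {1..n}"
    unfolding t_def by (rule nexts_in[OF n1 j])
  have tj: "t \<noteq> j"
    using nexts_eq_self_iff[OF j] n by (simp add: t_def)
  have pt: "prevs n t = j"
    by (simp add: t_def prevs_nexts[OF j])
  have pj: "p \<noteq> j"
    using prevs_eq_self_iff[OF j] n by (simp add: p_def)
  have pne: "i \<in> {1..n} \<Longrightarrow> i \<noteq> t \<Longrightarrow> prevs n i \<noteq> j" for i
    using pt prevs_eq_iff[OF _ tin] by metis
  show "\<alpha> p \<le> m j \<Longrightarrow> \<alpha> j < m t \<Longrightarrow>
      (Qword_shift n \<alpha>' m)(j := Qword_shift n \<alpha>' m j - 1) = Qword_shift n \<alpha> m'"
    using j tin tj pt pne pj
    by (auto simp: fun_eq_iff Qword_shift_def \<alpha>'_def m'_def p_def[symmetric])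
  show "\<alpha> p < m j \<Longrightarrow> \<alpha> j < m t \<Longrightarrow> Qword_shift n \<alpha>' (m(j := m j - 1)) = Qword_shift n \<alpha> m'"
    using j tin tj pt pne pj
    by (auto simp: fun_eq_iff Qword_shift_def \<alpha>'_def m'_def p_def[symmetric])
  show "\<alpha> p < m j \<Longrightarrow> \<alpha> j < m t \<Longrightarrow>
      (Qword_shift n \<alpha> (m'(j := m' j - 1)))(j := Suc (Qword_shift n \<alpha> (m'(j := m' j - 1)) j))
        = Qword_shift n \<alpha> m'"
    using j tin tj pt pne pj
    by (auto simp: fun_eq_iff Qword_shift_def m'_def p_def[symmetric])
qed

lemma Qword_betS_commutator_ring:
  assumes n: "2 \<le> n" and j: "j \<in> {1..n}"
  defines "t \<equiv> nexts n j"
  shows "Qword n (\<alpha>(j := Suc (\<alpha> j))) (betS j f) m - betS j (Qword n (\<alpha>(j := Suc (\<alpha> j))) f) m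
    = - (1 - qq ^ (2 * Suc (\<alpha> j))) * betS t (\<lambda>m. betS j (Qword n \<alpha> (bet j f)) m - Qword n \<alpha> f m) m"
proof -
  have n1: "1 \<le> n"
    using n by simp
  define p where "p = prevs n j"
  define \<alpha>' where "\<alpha>' = \<alpha>(j := Suc (\<alpha> j))"
  define x where "x = m j"
  define y where "y = m t"
  define mj where "mj = m(j := x - 1)"
  define m' where "m' = m(t := y - 1)"
  define m'' where "m'' = m'(j := m' j - 1)"
  define w where "w = Qword_shift n \<alpha>' m"
  define a where "a = \<alpha> p"
  define b where "b = \<alpha> j"
  define R where "R = (\<Prod>i\<in>{1..n}-{j}-{t}. qfall (m i) (\<alpha> (prevs n i)))"
  define U where "U = Qword_shift n \<alpha> m'"
  note shift = Qword_shift_betS_commutator_ring[OF n j, of \<alpha> m, folded t_def]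
  have tj: "t \<noteq> j"
    using nexts_eq_self_iff[OF j] n by (simp add: t_def)
  have pj: "p \<noteq> j"
    using prevs_eq_self_iff[OF j] n by (simp add: p_def)
  have weight: "Qword_weight n \<beta> mm = qfall (mm j) (\<beta> p) * qfall (mm t) (\<beta> j) * R"
    if "\<And>i. i \<noteq> j \<Longrightarrow> i \<noteq> t \<Longrightarrow> mm i = m i" "\<And>i. i \<noteq> p \<Longrightarrow> i \<noteq> j \<Longrightarrow> \<beta> i = \<alpha> i" for mm \<beta>
    using Qword_weight_local_pair[OF n j that[unfolded t_def p_def]] unfolding R_def p_def t_def .
  have shifted: "Qword n \<alpha>' (betS j f) m = qfall x a * qfall y (Suc b) * (1 - qq ^ (2 * (x - a + Suc b))) * R * f U"
  proof -
    have "Qword n \<alpha>' (betS j f) m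
        = Qword_weight n \<alpha>' m * (if w j = 0 then 0 else (1 - qq ^ (2 * w j)) * f (w(j := w j - 1)))"
      by (simp add: Qword_apply[OF n1] betS_def w_def)
    moreover have "Qword_weight n \<alpha>' m = qfall x a * qfall y (Suc b) * R"
      using weight[of m \<alpha>'] by (simp add: \<alpha>'_def x_def y_def a_def b_def pj)
    moreover have "w j = x - a + Suc b"
      using j by (simp add: w_def Qword_shift_def \<alpha>'_def x_def a_def b_def p_def pj[unfolded p_def])
    moreover have "w(j := w j - 1) = U" if "a \<le> x" "b < y"
      using shift(1) that by (simp add: w_def \<alpha>'_def x_def y_def a_def b_def p_def U_def m'_def)
    ultimately show ?thesis
      by (cases "a \<le> x \<and> b < y") (auto simp: qfall_eq_0)
  qed
  have commuted: "betS j (Qword n \<alpha>' f) m = qfall x (Suc a) * qfall y (Suc b) * R * f U"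
  proof -
    have "Qword n \<alpha>' f mj = qfall (x - 1) a * qfall y (Suc b) * R * f (Qword_shift n \<alpha>' mj)"
      using weight[of mj \<alpha>'] by (simp add: Qword_apply[OF n1] \<alpha>'_def mj_def x_def y_def a_def b_def pj tj)
    moreover have "Qword_shift n \<alpha>' mj = U" if "a < x" "b < y"
      using shift(2) that by (simp add: \<alpha>'_def mj_def x_def y_def a_def b_def p_def U_def m'_def)
    ultimately show ?thesis
      unfolding betS_def x_def[symmetric] mj_def[symmetric]
      by (cases "a < x \<and> b < y") (auto simp: qfall_Suc qfall_eq_0)
  qed
  have rhs: "betS t (\<lambda>m. betS j (Qword n \<alpha> (bet j f)) m - Qword n \<alpha> f m) m
      = qfall y (Suc b) * (qfall x (Suc a) - qfall x a) * R * f U"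
  proof -
    have "Qword n \<alpha> (bet j f) m'' = qfall (x - 1) a * qfall (y - 1) b * R * f U" if "a < x" "b < y"
      using weight[of m'' \<alpha>] shift(3) that
      by (simp add: Qword_apply[OF n1] bet_def m''_def m'_def x_def y_def a_def b_def p_def U_def tj tj[symmetric])
    moreover have "Qword n \<alpha> g m'' = qfall (x - 1) a * qfall (y - 1) b * R * g (Qword_shift n \<alpha> m'')" for g
      using weight[of m'' \<alpha>] by (simp add: Qword_apply[OF n1] m''_def m'_def x_def y_def a_def b_def tj tj[symmetric])
    moreover have "Qword n \<alpha> f m' = qfall x a * qfall (y - 1) b * R * f U"
      using weight[of m' \<alpha>] by (simp add: Qword_apply[OF n1] m'_def x_def y_def a_def b_def U_def tj tj[symmetric])
    moreover have "m' j = x"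
      using tj by (simp add: m'_def x_def)
    ultimately show ?thesis
      unfolding betS_def y_def[symmetric] m'_def[symmetric] m''_def[symmetric]
      by (cases "a < x \<and> b < y") (auto simp: qfall_Suc qfall_eq_0 algebra_simps)
  qed
  show ?thesis
    unfolding \<alpha>'_def[symmetric] unfolding b_def[symmetric] shifted commuted rhs
    using arg_cong[OF qfall_shift_diff[of x a b], of "\<lambda>z. z * (qfall y (Suc b) * R * f U)"]
    by (simp add: algebra_simps)
qed

lemma Qword_betS_commutator_single:
  assumes n: "n = 1" and j: "j \<in> {1..n}"
  defines "t \<equiv> nexts n j"
  shows "Qword n (\<alpha>(j := Suc (\<alpha> j))) (betS j f) m - betS j (Qword n (\<alpha>(j := Suc (\<alpha> j))) f) m
    = - (1 - qq ^ (2 * Suc (\<alpha> j))) * betS t (\<lambda>m. betS j (Qword n \<alpha> (bet j f)) m - Qword n \<alpha> f m) m"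
proof -
  have j1: "j = 1" and t_1: "t = 1"
    using j n by (simp_all add: t_def nexts_def)
  have "Qword_shift 1 \<beta> mm = mm(1 := mm 1 - \<beta> 1 + \<beta> 1)" for \<beta> mm
    by (auto simp: Qword_shift_def prevs_def fun_eq_iff)
  then have apply1: "Qword n \<beta> g mm = qfall (mm 1) (\<beta> 1) * g (mm(1 := mm 1 - \<beta> 1 + \<beta> 1))" for \<beta> g mm
    by (simp add: n Qword_apply Qword_weight_def prevs_def)
  define \<alpha>' where "\<alpha>' = \<alpha>(j := Suc (\<alpha> j))"
  define x where "x = m 1"
  define a where "a = \<alpha> j"
  show ?thesis
  proof (cases x)
    case 0
    then show ?thesis
      by (simp add: j1 t_1 x_def apply1 betS_def qfall_eq_0)
  next
    case (Suc y)
    define U where "U = m(1 := y)"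
    have mx: "m 1 = Suc y" "m (Suc 0) = Suc y"
      using Suc by (simp_all add: x_def)
    have ax: "\<alpha> 1 = a" "\<alpha> (Suc 0) = a"
      by (simp_all add: a_def j1)
    have shifted: "Qword n \<alpha>' (betS j f) m = (1 - qq ^ (2 * x)) * qfall x (Suc a) * f U"
    proof (cases "a < x")
      case True
      then show ?thesis
        using Suc by (simp add: apply1 betS_def j1 \<alpha>'_def mx ax U_def)
    qed (simp add: apply1 \<alpha>'_def x_def a_def j1 qfall_eq_0)
    have commuted: "betS j (Qword n \<alpha>' f) m = (1 - qq ^ (2 * x)) * qfall y (Suc a) * f U"
    proof (cases "Suc a \<le> y")
      case True
      then show ?thesis
        using Suc by (simp add: apply1 betS_def j1 \<alpha>'_def mx ax U_def)
    qed (simp add: apply1 betS_def j1 \<alpha>'_def mx ax qfall_eq_0)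
    have rhs: "betS t (\<lambda>m. betS j (Qword n \<alpha> (bet j f)) m - Qword n \<alpha> f m) m
        = (1 - qq ^ (2 * x)) * (qfall y (Suc a) - qfall y a) * f U"
    proof (cases "Suc a \<le> y")
      case True
      then show ?thesis
        using Suc by (simp add: apply1 betS_def bet_def j1 t_1 mx ax U_def qfall_Suc algebra_simps)
    next
      case False
      then show ?thesis
        using Suc by (cases "a = y") (auto simp: apply1 betS_def bet_def j1 t_1 mx ax U_def
            qfall_Suc qfall_eq_0 algebra_simps)
    qed
    show ?thesis
      unfolding \<alpha>'_def[symmetric] unfolding a_def[symmetric] shifted commuted rhs
      using arg_cong[OF qfall_Suc_diff[of y a], of "\<lambda>z. - z * ((1 - qq ^ (2 * x)) * f U)"]
      by (simp add: Suc algebra_simps qfall_Suc_Suc)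
  qed
qed

section \<open>Exchange relations of \<open>Q\<^sup>+\<close> with the generators\<close>
lemma one_minus_qq_power_neq_0:
  assumes "N \<noteq> 0"
  shows "1 - qq ^ N \<noteq> 0"
proof
  have "qq ^ k = Fract ([:0, 1:] ^ k) 1" for k
    by (induction k) (simp_all add: qq_def One_fract_def)
  moreover assume "1 - qq ^ N = 0"
  ultimately have "Fract (([:0, 1:] :: complex poly) ^ N) 1 = 1"
    by simp
  then have "Fract (([:0, 1:] :: complex poly) ^ N) 1 = Fract 1 1"
    by (simp only: One_fract_def)
  then have "([:0, 1:] :: complex poly) ^ N = 1"
    by (simp add: eq_fract)
  then have "degree (([:0, 1:] :: complex poly) ^ N) = 0"
    by simp
  then show False
    using assms degree_linear_power[of "0::complex" N] by simp
qed

lemma finite_comps: "finite (comps n r)"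
proof (rule finite_subset)
  have "\<alpha> x \<le> r" if "\<alpha> \<in> comps n r" "x \<in> {1..n}" for \<alpha> x
    using that member_le_sum[of x "{1..n}" \<alpha>] by (auto simp: comps_def)
  then show "comps n r \<subseteq> {f. \<forall>x. (x \<in> {1..n} \<longrightarrow> f x \<in> {..r}) \<and> (x \<notin> {1..n} \<longrightarrow> f x = 0)}"
    by (auto simp: comps_def)
qed (rule finite_set_of_finite_funs; simp)

lemma sum_fun_upd_Suc:
  fixes \<alpha> :: "nat \<Rightarrow> nat"
  assumes "p \<in> A" "finite A"
  shows "(\<Sum>i\<in>A. (\<alpha>(p := Suc (\<alpha> p))) i) = Suc (\<Sum>i\<in>A. \<alpha> i)"
proof -
  have "(\<Sum>i\<in>A. (\<alpha>(p := Suc (\<alpha> p))) i) = Suc (\<alpha> p) + (\<Sum>i\<in>A - {p}. \<alpha> i)"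
    using assms by (subst sum.remove[of A p]) (auto intro!: sum.cong)
  also have "\<dots> = Suc (\<Sum>i\<in>A. \<alpha> i)"
    using sum.remove[OF assms(2,1), of \<alpha>] by simp
  finally show ?thesis .
qed

lemma fun_upd_Suc_in_comps_iff:
  assumes "p \<in> {1..n}"
  shows "\<alpha>(p := Suc (\<alpha> p)) \<in> comps n (Suc s) \<longleftrightarrow> \<alpha> \<in> comps n s"
proof -
  have "(\<Sum>i=1..n. (\<alpha>(p := Suc (\<alpha> p))) i) = Suc (\<Sum>i=1..n. \<alpha> i)"
    using assms by (intro sum_fun_upd_Suc) auto
  moreover have "(\<forall>i. i \<notin> {1..n} \<longrightarrow> (\<alpha>(p := Suc (\<alpha> p))) i = 0) \<longleftrightarrow> (\<forall>i. i \<notin> {1..n} \<longrightarrow> \<alpha> i = 0)"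
    using assms by auto
  ultimately show ?thesis
    unfolding comps_def mem_Collect_eq by simp
qed

lemma comps_Suc_split:
  assumes p: "p \<in> {1..n}"
  shows "comps n (Suc s) = {\<alpha>\<in>comps n (Suc s). \<alpha> p = 0} \<union> (\<lambda>\<alpha>. \<alpha>(p := Suc (\<alpha> p))) ` comps n s"
proof (intro equalityI subsetI)
  fix \<beta> assume \<beta>: "\<beta> \<in> comps n (Suc s)"
  show "\<beta> \<in> {\<alpha>\<in>comps n (Suc s). \<alpha> p = 0} \<union> (\<lambda>\<alpha>. \<alpha>(p := Suc (\<alpha> p))) ` comps n s"
  proof (cases "\<beta> p = 0")
    case False
    then have "\<beta> = (\<beta>(p := \<beta> p - 1))(p := Suc ((\<beta>(p := \<beta> p - 1)) p))"
      by auto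
    moreover then have "\<beta>(p := \<beta> p - 1) \<in> comps n s"
      using \<beta> fun_upd_Suc_in_comps_iff[OF p, of "\<beta>(p := \<beta> p - 1)" s] by simp
    ultimately show ?thesis
      by blast
  qed (use \<beta> in auto)
qed (use fun_upd_Suc_in_comps_iff[OF p] in auto)

lemma sum_comps_Suc_shift:
  assumes p: "p \<in> {1..n}" and z: "\<And>\<alpha>. \<alpha> \<in> comps n (Suc s) \<Longrightarrow> \<alpha> p = 0 \<Longrightarrow> T \<alpha> = 0"
  shows "(\<Sum>\<alpha>\<in>comps n (Suc s). T \<alpha>) = (\<Sum>\<alpha>\<in>comps n s. T (\<alpha>(p := Suc (\<alpha> p))))"
proof -
  let ?Z = "{\<alpha>\<in>comps n (Suc s). \<alpha> p = 0}" and ?I = "(\<lambda>\<alpha>. \<alpha>(p := Suc (\<alpha> p))) ` comps n s"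
  have inj: "inj_on (\<lambda>\<alpha>. \<alpha>(p := Suc (\<alpha> p))) (comps n s)"
  proof (rule inj_onI)
    fix a b assume "a(p := Suc (a p)) = b(p := Suc (b p))"
    then have "(a(p := Suc (a p)))(p := a p) = (b(p := Suc (b p)))(p := b p)"
      by (metis fun_upd_same nat.inject)
    then show "a = b"
      by simp
  qed
  have "(\<Sum>\<alpha>\<in>comps n (Suc s). T \<alpha>) = (\<Sum>\<alpha>\<in>?Z. T \<alpha>) + (\<Sum>\<alpha>\<in>?I. T \<alpha>)"
    by (subst comps_Suc_split[OF p], rule sum.union_disjoint) (auto simp: finite_comps)
  also have "(\<Sum>\<alpha>\<in>?Z. T \<alpha>) = 0"
    using z by simp
  also have "(\<Sum>\<alpha>\<in>?I. T \<alpha>) = (\<Sum>\<alpha>\<in>comps n s. T (\<alpha>(p := Suc (\<alpha> p))))"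
    by (subst sum.reindex[OF inj]) simp
  finally show ?thesis
    by simp
qed

definition comp_coeff :: "nat \<Rightarrow> nat \<Rightarrow> (nat \<Rightarrow> nat) \<Rightarrow> K" where
  "comp_coeff n r \<alpha> = (-1) ^ r * inverse (\<Prod>i=1..n. qpoch (\<alpha> i))"

lemma comp_coeff_fun_upd_Suc:
  assumes p: "p \<in> {1..n}"
  shows "comp_coeff n (Suc s) (\<alpha>(p := Suc (\<alpha> p))) * (- (1 - qq ^ (2 * Suc (\<alpha> p)))) = comp_coeff n s \<alpha>"
proof -
  define D where "D = 1 - qq ^ (2 * Suc (\<alpha> p))"
  have "(\<Prod>i=1..n. qpoch ((\<alpha>(p := Suc (\<alpha> p))) i)) = qpoch (Suc (\<alpha> p)) * (\<Prod>i\<in>{1..n}-{p}. qpoch (\<alpha> i))"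
    using p by (subst prod.remove[of _ p]) (auto intro!: prod.cong)
  also have "\<dots> = D * (\<Prod>i=1..n. qpoch (\<alpha> i))"
    using p by (subst (2) prod.remove[of _ p]) (auto simp: qpoch_def D_def)
  finally have "(\<Prod>i=1..n. qpoch ((\<alpha>(p := Suc (\<alpha> p))) i)) = D * (\<Prod>i=1..n. qpoch (\<alpha> i))" .
  moreover have "D \<noteq> 0"
    unfolding D_def by (rule one_minus_qq_power_neq_0) simp
  ultimately show ?thesis
    unfolding comp_coeff_def D_def[symmetric] by (simp add: inverse_mult_distrib)
qed

lemma Qcoef_apply: "Qcoef n r f m = (\<Sum>\<alpha>\<in>comps n r. comp_coeff n r \<alpha> * Qword n \<alpha> f m)"
  by (simp add: Qcoef_def op_smul_def op_sum_def comp_coeff_def sum_distrib_left mult.assoc)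

lemma op_linear_sum_scale:
  "op_linear A \<Longrightarrow> A (\<lambda>m. \<Sum>i\<in>S. c i * g i m) m = (\<Sum>i\<in>S. c i * A (g i) m)"
  using op_linear_sum[of A "\<lambda>i m. c i * g i m" S m] by (simp add: op_linear_scale)

lemma Qcoef_commutator_via_Qword:
  assumes p: "p \<in> {1..n}" and A: "op_linear A"
    and commute: "\<And>\<alpha>. \<alpha> p = 0 \<Longrightarrow> Qword n \<alpha> (A f) m = A (Qword n \<alpha> f) m"
    and step: "\<And>\<alpha>. Qword n (\<alpha>(p := Suc (\<alpha> p))) (A f) m - A (Qword n (\<alpha>(p := Suc (\<alpha> p))) f) m
      = - (1 - qq ^ (2 * Suc (\<alpha> p))) * C \<alpha>"
  shows "Qcoef n (Suc s) (A f) m - A (Qcoef n (Suc s) f) m = (\<Sum>\<alpha>\<in>comps n s. comp_coeff n s \<alpha> * C \<alpha>)"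
proof -
  let ?T = "\<lambda>\<alpha>. comp_coeff n (Suc s) \<alpha> * (Qword n \<alpha> (A f) m - A (Qword n \<alpha> f) m)"
  have "Qcoef n (Suc s) (A f) m - A (Qcoef n (Suc s) f) m = (\<Sum>\<alpha>\<in>comps n (Suc s). ?T \<alpha>)"
    unfolding Qcoef_apply[abs_def] op_linear_sum_scale[OF A]
    by (simp add: sum_subtractf right_diff_distrib)
  also have "\<dots> = (\<Sum>\<alpha>\<in>comps n s. ?T (\<alpha>(p := Suc (\<alpha> p))))"
    by (rule sum_comps_Suc_shift[OF p]) (simp add: commute)
  also have "\<dots> = (\<Sum>\<alpha>\<in>comps n s. comp_coeff n (Suc s) (\<alpha>(p := Suc (\<alpha> p)))
      * (- (1 - qq ^ (2 * Suc (\<alpha> p)))) * C \<alpha>)"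
    by (simp only: step mult.assoc)
  also have "\<dots> = (\<Sum>\<alpha>\<in>comps n s. comp_coeff n s \<alpha> * C \<alpha>)"
    by (simp only: comp_coeff_fun_upd_Suc[OF p])
  finally show ?thesis .
qed

lemma Qcoef_bet_commutator:
  assumes n: "1 \<le> n" and j: "j \<in> {1..n}"
  defines "p \<equiv> prevs n j"
  shows "Qcoef n (Suc s) (bet j f) m - bet j (Qcoef n (Suc s) f) m
    = Qcoef n s (bet p f) m - betS j (Qcoef n s (bet j (bet p f))) m"
proof -
  have "Qcoef n (Suc s) (bet j f) m - bet j (Qcoef n (Suc s) f) m
    = (\<Sum>\<alpha>\<in>comps n s. comp_coeff n s \<alpha> * (Qword n \<alpha> (bet p f) m - betS j (Qword n \<alpha> (bet j (bet p f))) m))"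
    using Qword_bet_commute[OF n j] Qword_bet_commutator[OF n j]
    by (intro Qcoef_commutator_via_Qword[OF prevs_in[OF n j] op_linear_bet]) (simp_all add: p_def)
  also have "\<dots> = Qcoef n s (bet p f) m - betS j (Qcoef n s (bet j (bet p f))) m"
    unfolding Qcoef_apply[abs_def] op_linear_sum_scale[OF op_linear_betS]
    by (simp add: sum_subtractf right_diff_distrib)
  finally show ?thesis .
qed

lemma Qcoef_betS_commutator:
  assumes n: "1 \<le> n" and j: "j \<in> {1..n}"
  defines "t \<equiv> nexts n j"
  shows "Qcoef n (Suc s) (betS j f) m - betS j (Qcoef n (Suc s) f) m
    = betS t (\<lambda>m. betS j (Qcoef n s (bet j f)) m - Qcoef n s f m) m"
proof -
  have step: "Qword n (\<alpha>(j := Suc (\<alpha> j))) (betS j f) m - betS j (Qword n (\<alpha>(j := Suc (\<alpha> j))) f) m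
    = - (1 - qq ^ (2 * Suc (\<alpha> j))) * betS t (\<lambda>m. betS j (Qword n \<alpha> (bet j f)) m - Qword n \<alpha> f m) m" for \<alpha>
  proof (cases "n = 1")
    case True
    then show ?thesis
      using Qword_betS_commutator_single j by (simp add: t_def)
  next
    case False
    then show ?thesis
      using Qword_betS_commutator_ring[of n j] n j by (simp add: t_def)
  qed
  have "Qcoef n (Suc s) (betS j f) m - betS j (Qcoef n (Suc s) f) m
    = (\<Sum>\<alpha>\<in>comps n s. comp_coeff n s \<alpha> * betS t (\<lambda>m. betS j (Qword n \<alpha> (bet j f)) m - Qword n \<alpha> f m) m)"
    using Qword_betS_commute[OF n j] step
    by (intro Qcoef_commutator_via_Qword[OF j op_linear_betS]) simp_all
  also have "\<dots> = betS t (\<lambda>m. \<Sum>\<alpha>\<in>comps n s. comp_coeff n s \<alpha> * (betS j (Qword n \<alpha> (bet j f)) m - Qword n \<alpha> f m)) m"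
    by (rule op_linear_sum_scale[OF op_linear_betS, symmetric])
  also have "(\<lambda>m. \<Sum>\<alpha>\<in>comps n s. comp_coeff n s \<alpha> * (betS j (Qword n \<alpha> (bet j f)) m - Qword n \<alpha> f m))
    = (\<lambda>m. betS j (Qcoef n s (bet j f)) m - Qcoef n s f m)"
    unfolding Qcoef_apply[abs_def] op_linear_sum_scale[OF op_linear_betS]
    by (simp add: sum_subtractf right_diff_distrib)
  finally show ?thesis .
qed

section \<open>The relations and their uniqueness\<close>

lemma rels_conj_Qser:
  assumes n: "1 \<le> n"
  shows "rels n (tbet n) (tbetS n)"
proof -
  have Q0: "Qser n 0 = id"
    by (simp add: Qser_def Qcoef_0)
  have "ps_sub (tbet n j) (ps_const (bet j)) =
      ps_v (ps_mult (ps_sub ps_one (ps_mult (ps_const (betS j)) (tbet n j))) (tbet n (prevs n j)))"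
    if j: "j \<in> {1..n}" for j
    unfolding tbet_def conjQ_def
    by (rule conj_annihilator_relation[OF ps_linear_Qser ps_linear_Qinv Qser_Qinv Qinv_Qser
          op_linear_bet op_linear_bet op_linear_betS Q0])
      (simp add: Qser_def Qcoef_bet_commutator[OF n j])
  moreover have "ps_sub (tbetS n j) (ps_const (betS j)) =
      ps_v (ps_mult (ps_const (betS (nexts n j))) (ps_sub (ps_mult (ps_const (betS j)) (tbet n j)) ps_one))"
    if j: "j \<in> {1..n}" for j
    unfolding tbet_def tbetS_def conjQ_def
    by (rule conj_creator_relation[OF ps_linear_Qser ps_linear_Qinv Qser_Qinv Qinv_Qser
          op_linear_bet op_linear_betS op_linear_betS Q0])
      (simp add: Qser_def Qcoef_betS_commutator[OF n j])
  ultimately show ?thesis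
    unfolding rels_def eq_on_def by simp
qed

lemma rels_X_coeff:
  assumes "rels n X Y" "j \<in> {1..n}" "fock n f"
  shows "X j 0 f = bet j f"
    and "X j (Suc s) f = ps_mult (ps_sub ps_one (ps_mult (ps_const (betS j)) (X j))) (X (prevs n j)) s f"
proof -
  have "ps_sub (X j) (ps_const (bet j)) r f
      = ps_v (ps_mult (ps_sub ps_one (ps_mult (ps_const (betS j)) (X j))) (X (prevs n j))) r f" for r
    using assms unfolding rels_def eq_on_def by blast
  from fun_cong[OF this[of 0]] fun_cong[OF this[of "Suc s"]]
  show "X j 0 f = bet j f"
    and "X j (Suc s) f = ps_mult (ps_sub ps_one (ps_mult (ps_const (betS j)) (X j))) (X (prevs n j)) s f"
    by (auto simp: ps_sub_apply ps_const_apply ps_v_apply)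
qed

lemma rels_Y_coeff:
  assumes "rels n X Y" "j \<in> {1..n}" "fock n f"
  shows "Y j 0 f = betS j f"
    and "Y j (Suc s) f = betS (nexts n j) (ps_sub (ps_mult (ps_const (betS j)) (X j)) ps_one s f)"
proof -
  have "ps_sub (Y j) (ps_const (betS j)) r f
      = ps_v (ps_mult (ps_const (betS (nexts n j))) (ps_sub (ps_mult (ps_const (betS j)) (X j)) ps_one)) r f" for r
    using assms unfolding rels_def eq_on_def by blast
  from fun_cong[OF this[of 0]] fun_cong[OF this[of "Suc s"]]
  show "Y j 0 f = betS j f"
    and "Y j (Suc s) f = betS (nexts n j) (ps_sub (ps_mult (ps_const (betS j)) (X j)) ps_one s f)"
    by (auto simp: ps_sub_apply ps_const_apply ps_v_apply ps_mult_const_left)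
qed

text \<open>The relations are imposed only on \<open>F\<^sup>n\<close>, while the recursion feeds the vectors
  \<open>X (prevs n j) k f\<close> into \<open>X j\<close>; hence \<open>X\<close> has to preserve \<open>F\<^sup>n\<close>.\<close>

lemma rels_unique_X:
  assumes n: "1 \<le> n" and XY: "rels n X Y" and XY': "rels n X' Y'"
    and fock_X: "\<And>j r f. j \<in> {1..n} \<Longrightarrow> fock n f \<Longrightarrow> fock n (X j r f)"
  shows "j \<in> {1..n} \<Longrightarrow> fock n f \<Longrightarrow> X j r f = X' j r f"
proof (induction r arbitrary: j f rule: less_induct)
  case (less r)
  show ?case
  proof (cases r)
    case 0
    then show ?thesis
      using less.prems by (simp add: rels_X_coeff(1)[OF XY] rels_X_coeff(1)[OF XY'])
  next
    case (Suc s)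
    let ?p = "prevs n j"
    have p: "?p \<in> {1..n}"
      using prevs_in[OF n less.prems(1)] .
    have "ps_mult (ps_sub ps_one (ps_mult (ps_const (betS j)) (X j))) (X ?p) s f
        = ps_mult (ps_sub ps_one (ps_mult (ps_const (betS j)) (X' j))) (X' ?p) s f"
    proof (intro ext)
      fix m
      have e1: "X ?p (s - k) f = X' ?p (s - k) f" if "k \<le> s" for k
        using less.IH[of "s - k" ?p f] Suc p less.prems(2) by simp
      have e2: "X j k (X' ?p (s - k) f) = X' j k (X' ?p (s - k) f)" if "k \<le> s" for k
      proof -
        have "fock n (X' ?p (s - k) f)"
          using fock_X[OF p less.prems(2), of "s - k"] e1[OF that] by simp
        then show ?thesis
          using less.IH[of k j] that Suc less.prems(1) by simp
      qed
      show "ps_mult (ps_sub ps_one (ps_mult (ps_const (betS j)) (X j))) (X ?p) s f m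
          = ps_mult (ps_sub ps_one (ps_mult (ps_const (betS j)) (X' j))) (X' ?p) s f m"
        unfolding ps_mult_apply[where A = "ps_sub _ _"]
        by (intro sum.cong refl) (simp add: ps_sub_apply ps_mult_const_left e1 e2)
    qed
    then show ?thesis
      using less.prems Suc by (simp add: rels_X_coeff(2)[OF XY] rels_X_coeff(2)[OF XY'])
  qed
qed

lemma rels_unique_Y:
  assumes XY: "rels n X Y" and XY': "rels n X' Y'" and j: "j \<in> {1..n}" and f: "fock n f"
    and X: "\<And>r. X j r f = X' j r f"
  shows "Y j r f = Y' j r f"
proof (cases r)
  case (Suc s)
  then show ?thesis
    using X by (simp add: rels_Y_coeff(2)[OF XY j f] rels_Y_coeff(2)[OF XY' j f] ps_sub_def op_sub_def
        ps_mult_const_left)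
qed (simp add: rels_Y_coeff(1)[OF XY j f] rels_Y_coeff(1)[OF XY' j f])

theorem mainTheorem1:
  fixes n :: nat
  assumes "n \<ge> 1"
  shows "rels n (tbet n) (tbetS n) \<and>
    (\<forall>X Y. (\<forall>j\<in>{1..n}. \<forall>r f. fock n f \<longrightarrow> fock n (X j r f)) \<and> rels n X Y \<longrightarrow>
       (\<forall>j\<in>{1..n}. \<forall>r. eq_on n (X j r) (tbet n j r) \<and> eq_on n (Y j r) (tbetS n j r)))"
proof (intro conjI allI impI)
  have rels_conj: "rels n (tbet n) (tbetS n)"
    using assms by (rule rels_conj_Qser)
  then show "rels n (tbet n) (tbetS n)" .
  fix X Y
  assume H: "(\<forall>j\<in>{1..n}. \<forall>r f. fock n f \<longrightarrow> fock n (X j r f)) \<and> rels n X Y"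
  then have XY: "rels n X Y"
    by blast
  have X: "X j r f = tbet n j r f" if "j \<in> {1..n}" "fock n f" for j r f
    using rels_unique_X[OF assms XY rels_conj] H that by blast
  show "\<forall>j\<in>{1..n}. \<forall>r. eq_on n (X j r) (tbet n j r) \<and> eq_on n (Y j r) (tbetS n j r)"
    unfolding eq_on_def using X rels_unique_Y[OF XY rels_conj] by blast
qed

end
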